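(* Let $p$ be a prime. For every real number $M$ there exists a positive integer $A$ such that for all integers $r>1$ and $a\ge A$, \[\frac{(r^a-1)_{p'}}{a\cdot a_p}>M.\] That is, $(r^a-1)_{p'}/(a\cdot a_p)\to\infty$ as $a\to\infty$, uniformly in the integer $r>1$.
   Context: For a positive integer $n$, $n_p$ denotes the largest power of $p$ dividing $n$ and $n_{p'}=n/n_p$. *)

theory Defs
  imports Complex_Main "HOL-Computational_Algebra.Primes"
begin

definition p_part :: "nat \<Rightarrow> nat \<Rightarrow> nat" where
  "p_part p n = p ^ multiplicity p n"

definition p'_part :: "nat \<Rightarrow> nat \<Rightarrow> nat" where
  "p'_part p n = n div p_part p n"

end

theory Submission
  imports Defs "HOL-Number_Theory.Number_Theory" "HOL-Real_Asymp.Real_Asymp"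
begin

text \<open>Lifting the exponent: if p does not divide r and e = totient(p^2), then r^e = 1 mod p^2,
  hence v_p(r^(e a) - 1) = v_p(r^e - 1) + v_p(a). Since r^a - 1 divides r^(e a) - 1, this gives
  (r^a - 1)_p \<le> r^e a, trivially so also when p divides r. With a_p \<le> a the quotient is at least
  (r^a - 1)/(r^e a^3) \<ge> 2^a/(2^(e+1) a^3), a bound independent of r that tends to infinity.\<close>

lemma power_minus_one_eq_nat:
  fixes x :: nat
  assumes "x \<ge> 1"
  shows "x ^ n - 1 = (x - 1) * (\<Sum>i<n. x ^ i)"
proof -
  have "int (x ^ n - 1) = int x ^ n - 1" using assms by (simp add: of_nat_diff)
  also have "\<dots> = (int x - 1) * (\<Sum>i<n. int x ^ i)" by (rule power_diff_1_eq)
  also have "\<dots> = int ((x - 1) * (\<Sum>i<n. x ^ i))" using assms by (simp add: of_nat_diff)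
  finally show ?thesis by linarith
qed

lemma minus_one_dvd_power_minus_one_nat:
  fixes x :: nat
  assumes "x \<ge> 1"
  shows "x - 1 dvd x ^ n - 1"
  using power_minus_one_eq_nat[OF assms, of n] by simp

lemma geometric_sum_cong_nat:
  fixes x q :: nat
  assumes "[x = 1] (mod q)"
  shows "[(\<Sum>i<n. x ^ i) = n] (mod q)"
proof -
  have "[(\<Sum>i<n. x ^ i) = (\<Sum>i<n. 1)] (mod q)"
    by (rule cong_sum) (use cong_pow[OF assms] in simp)
  then show ?thesis by simp
qed

lemma multiplicity_power_minus_one_coprime_exp:
  fixes p x m :: nat
  assumes p: "prime p" and x: "x > 1" and "p dvd x - 1" and m: "\<not> p dvd m"
  shows "multiplicity p (x ^ m - 1) = multiplicity p (x - 1)"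
proof -
  have "[x = 1] (mod p)" using assms by (subst cong_altdef_nat) auto
  then have sum_not_dvd: "\<not> p dvd (\<Sum>i<m. x ^ i)"
    using geometric_sum_cong_nat m by (meson cong_dvd_iff)
  then have "(\<Sum>i<m. x ^ i) \<noteq> 0" by (metis dvd_0_right)
  then have "multiplicity p (x ^ m - 1) =
      multiplicity p (x - 1) + multiplicity p (\<Sum>i<m. x ^ i)"
    using power_minus_one_eq_nat[of x m] x p by (simp add: prime_elem_multiplicity_mult_distrib)
  then show ?thesis using sum_not_dvd by (simp add: not_dvd_imp_multiplicity_0)
qed

lemma multiplicity_power_prime_minus_one:
  fixes p y :: nat
  assumes p: "prime p" and y: "y > 1" and "p\<^sup>2 dvd y - 1"
  shows "multiplicity p (y ^ p - 1) = Suc (multiplicity p (y - 1))"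
proof -
  have "[y = 1] (mod p\<^sup>2)" using assms by (subst cong_altdef_nat) auto
  then have sum_cong: "[(\<Sum>i<p. y ^ i) = p] (mod p\<^sup>2)" by (rule geometric_sum_cong_nat)
  have "p dvd p\<^sup>2" by (simp add: power2_eq_square)
  then have "p dvd (\<Sum>i<p. y ^ i)"
    using sum_cong by (meson cong_dvd_iff cong_dvd_modulus_nat dvd_refl)
  then obtain t where t: "(\<Sum>i<p. y ^ i) = p * t" by blast
  have t_not_dvd: "\<not> p dvd t"
  proof
    assume "p dvd t"
    then have "p\<^sup>2 dvd (\<Sum>i<p. y ^ i)" using t by (auto simp: power2_eq_square)
    then have "p\<^sup>2 dvd p" using sum_cong by (meson cong_dvd_iff)
    then have "p * p \<le> p" using p by (metis dvd_imp_le power2_eq_square prime_gt_0_nat)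
    then show False using prime_gt_1_nat[OF p] by simp
  qed
  then have "t \<noteq> 0" by (metis dvd_0_right)
  then have "multiplicity p (y ^ p - 1) = multiplicity p (y - 1) + multiplicity p (p * t)"
    using power_minus_one_eq_nat[of y p] y t p by (simp add: prime_elem_multiplicity_mult_distrib)
  moreover have "multiplicity p (p * t) = 1"
    using t_not_dvd p \<open>t \<noteq> 0\<close> by (metis multiplicity_decomposeI not_prime_0 power_one_right)
  ultimately show ?thesis by simp
qed

lemma multiplicity_power_prime_power_minus_one:
  fixes p x :: nat
  assumes p: "prime p" and x: "x > 1" and px: "p\<^sup>2 dvd x - 1"
  shows "multiplicity p (x ^ (p ^ k) - 1) = multiplicity p (x - 1) + k"
proof (induction k)
  case 0
  then show ?case by simp
next
  case (Suc k)
  have "x ^ (p ^ k) > 1" using x p by (intro one_less_power) (auto simp: prime_gt_0_nat)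
  moreover have "p\<^sup>2 dvd x ^ (p ^ k) - 1"
    using px minus_one_dvd_power_minus_one_nat[of x "p ^ k"] x dvd_trans by auto
  ultimately have "multiplicity p ((x ^ (p ^ k)) ^ p - 1) = Suc (multiplicity p (x ^ (p ^ k) - 1))"
    by (rule multiplicity_power_prime_minus_one[OF p])
  moreover have "(x ^ (p ^ k)) ^ p = x ^ (p ^ Suc k)" by (simp add: power_mult[symmetric] mult.commute)
  ultimately show ?case using Suc by simp
qed

lemma multiplicity_power_minus_one:
  fixes p x a :: nat
  assumes p: "prime p" and x: "x > 1" and px: "p\<^sup>2 dvd x - 1" and a: "a > 0"
  shows "multiplicity p (x ^ a - 1) = multiplicity p (x - 1) + multiplicity p a"
proof -
  define k where "k = multiplicity p a"
  obtain m where a_eq: "a = p ^ k * m" and m: "\<not> p dvd m"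
    using multiplicity_decompose'[of a p] a p unfolding k_def by (metis not_prime_unit gr_implies_not0)
  define y where "y = x ^ (p ^ k)"
  have y: "y > 1" unfolding y_def using x p by (intro one_less_power) (auto simp: prime_gt_0_nat)
  have "p dvd x - 1" using px by (simp add: power2_eq_square dvd_mult_left)
  then have "p dvd y - 1"
    unfolding y_def using minus_one_dvd_power_minus_one_nat[of x "p ^ k"] x dvd_trans by simp
  then have "multiplicity p (y ^ m - 1) = multiplicity p (y - 1)"
    using multiplicity_power_minus_one_coprime_exp[OF p y _ m] by simp
  moreover have "y ^ m = x ^ a" unfolding y_def a_eq by (simp add: power_mult)
  ultimately show ?thesis
    using multiplicity_power_prime_power_minus_one[OF p x px, of k] by (simp add: y_def k_def)
qed

lemma p_part_dvd: "p_part p n dvd n"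
  by (simp add: p_part_def multiplicity_dvd)

lemma p_part_le: "n > 0 \<Longrightarrow> p_part p n \<le> n"
  by (simp add: p_part_dvd dvd_imp_le)

lemma p_part_pos: "prime p \<Longrightarrow> p_part p n > 0"
  by (simp add: p_part_def prime_gt_0_nat)

lemma real_p'_part: "real (p'_part p n) = real n / real (p_part p n)"
  by (simp add: p'_part_def real_of_nat_div p_part_dvd)

lemma p_part_power_minus_one_le:
  fixes p r a :: nat
  assumes p: "prime p" and r: "r > 1" and a: "a > 0"
  shows "p_part p (r ^ a - 1) \<le> r ^ totient (p\<^sup>2) * a"
proof (cases "p dvd r")
  case True
  have "p dvd r ^ a" using dvd_trans[OF True dvd_power[of a r]] a by simp
  have "\<not> p dvd r ^ a - 1"
  proof
    assume "p dvd r ^ a - 1"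
    with \<open>p dvd r ^ a\<close> have "p dvd r ^ a - (r ^ a - 1)" by (rule dvd_diff_nat)
    moreover have "r ^ a - (r ^ a - 1) = 1" using r by (simp add: Suc_leI)
    ultimately show False using p by (simp add: prime_gt_1_nat)
  qed
  then have "p_part p (r ^ a - 1) = 1" by (simp add: p_part_def not_dvd_imp_multiplicity_0)
  then show ?thesis using r a by simp
next
  case False
  define e where "e = totient (p\<^sup>2)"
  define x where "x = r ^ e"
  have "e > 0" using p by (simp add: e_def prime_gt_0_nat)
  then have x: "x > 1" unfolding x_def using r by (intro one_less_power) auto
  have "coprime r (p\<^sup>2)" using False p by (simp add: prime_imp_coprime coprime_commute)
  then have "[x = 1] (mod p\<^sup>2)" unfolding x_def e_def by (rule euler_theorem)
  then have px: "p\<^sup>2 dvd x - 1" using x by (subst (asm) cong_altdef_nat) auto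
  have "r ^ a - 1 dvd (r ^ a) ^ e - 1" using r by (intro minus_one_dvd_power_minus_one_nat) simp
  also have "(r ^ a) ^ e = x ^ a" by (simp add: x_def power_mult[symmetric] mult.commute)
  finally have "multiplicity p (r ^ a - 1) \<le> multiplicity p (x ^ a - 1)"
    using one_less_power[OF x a] by (intro dvd_imp_multiplicity_le) auto
  also have "\<dots> = multiplicity p (x - 1) + multiplicity p a"
    using multiplicity_power_minus_one[OF p x px a] .
  finally have "p_part p (r ^ a - 1) \<le> p_part p (x - 1) * p_part p a"
    unfolding p_part_def power_add[symmetric] using prime_gt_0_nat[OF p]
    by (intro power_increasing) auto
  also have "\<dots> \<le> x * a" using p_part_le[of "x - 1" p] p_part_le[OF a, of p] x by (intro mult_mono) auto
  finally show ?thesis by (simp add: x_def e_def)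
qed

lemma p'_part_ratio_lower_bound:
  fixes p r a :: nat
  defines "e \<equiv> totient (p\<^sup>2)"
  assumes p: "prime p" and r: "r > 1" and a: "a > 0" and ae: "e \<le> a"
  shows "2 ^ a / (2 ^ Suc e * real a ^ 3)
    \<le> real (p'_part p (r ^ a - 1)) / (real a * real (p_part p a))"
proof -
  define n where "n = r ^ a - 1"
  have r_le: "r ^ a \<ge> r" using r a by (simp add: self_le_power)
  then have r_pow: "real r ^ a \<ge> 2" using r by (metis of_nat_numeral of_nat_power of_nat_le_iff
      Suc_1 Suc_leI order.trans)
  have n: "real n = real r ^ a - 1" using r_le r by (simp add: n_def of_nat_diff)
  have denom: "real (p_part p n) * real a * real (p_part p a) \<le> real r ^ e * real a ^ 3"
  proof -
    have "real (p_part p n) * real a * real (p_part p a) \<le> (real r ^ e * real a) * real a * real a"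
      using p_part_power_minus_one_le[OF p r a] p_part_le[OF a, of p]
      unfolding n_def e_def by (intro mult_mono) (auto simp flip: of_nat_power of_nat_mult)
    then show ?thesis by (simp add: power3_eq_cube mult_ac)
  qed
  have "2 ^ a / (2 ^ Suc e * real a ^ 3) = 2 ^ (a - e) / (2 * real a ^ 3)"
    using ae by (simp add: power_diff)
  also have "\<dots> \<le> real r ^ (a - e) / (2 * real a ^ 3)"
    using r by (intro divide_right_mono power_mono) auto
  also have "\<dots> = (real r ^ a / 2) / (real r ^ e * real a ^ 3)"
    using r ae by (simp add: power_diff)
  also have "\<dots> \<le> real n / (real r ^ e * real a ^ 3)"
    using n r_pow r by (intro divide_right_mono) auto
  also have "\<dots> \<le> real n / (real (p_part p n) * real a * real (p_part p a))"
    using denom p_part_pos[OF p] a r by (intro divide_left_mono mult_pos_pos) auto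
  also have "\<dots> = real (p'_part p n) / (real a * real (p_part p a))"
    by (simp add: real_p'_part mult_ac)
  finally show ?thesis by (simp add: n_def)
qed

theorem lemma2p5:
  fixes p :: nat
  assumes "prime p"
  shows "\<forall>M::real. \<exists>A::nat. A > 0 \<and>
           (\<forall>r a::nat. r > 1 \<longrightarrow> a \<ge> A \<longrightarrow>
              real (p'_part p (r ^ a - 1)) / (real a * real (p_part p a)) > M)"
proof
  fix M :: real
  define e where "e = totient (p\<^sup>2)"
  have "filterlim (\<lambda>a::nat. 2 ^ a / (2 ^ Suc e * real a ^ 3)) at_top sequentially"
    by real_asymp
  then have "\<forall>\<^sub>F a in sequentially. M < 2 ^ a / (2 ^ Suc e * real a ^ 3)"
    by (simp add: filterlim_at_top_dense)
  then obtain N where N: "\<And>a. a \<ge> N \<Longrightarrow> M < 2 ^ a / (2 ^ Suc e * real a ^ 3)"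
    by (auto simp: eventually_sequentially)
  have "r > 1 \<Longrightarrow> a \<ge> N + e + 1 \<Longrightarrow>
      M < real (p'_part p (r ^ a - 1)) / (real a * real (p_part p a))" for r a
    using N[of a] p'_part_ratio_lower_bound[OF assms, of r a] unfolding e_def by fastforce
  then show "\<exists>A>0. \<forall>r a. 1 < r \<longrightarrow> A \<le> a \<longrightarrow>
      M < real (p'_part p (r ^ a - 1)) / (real a * real (p_part p a))"
    by (intro exI[of _ "N + e + 1"]) auto
qed

end
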